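(* Let $k\ge 2$, $n = 2k+1$, and let $A=(a_{ij})$ be an $n\times n$ matrix of the following form: $a_{i+1,i}=s$ for $1\le i\le n-1$ and $a_{ij}=0$ for $i>j+1$; $a_{1j}=t$ for $1\le j\le k$, $a_{1j}=0$ for $k+1\le j\le 2k$, $a_{1n}=t$; for $2\le i\le k+1$: $a_{ij}=t$ for $k+1\le j\le 2k$ and $a_{in}=0$; for $k+2\le i\le n$: $a_{in}=t$; and the remaining ("free") entries $a_{ij}$ with $2\le i\le j\le k$ or $k+2\le i\le j\le 2k$ each lie in $\{0,t\}$. If at least one free entry equals $t$, then, viewing $\det A$ as a polynomial in the indeterminates $s$ and $t$, the coefficient of the monomial $s^{n-4}t^4$ in $\det A$ is nonzero.
   Context: Every entry of $A$ is $0$, $s$ or $t$, so $\det A$ is a polynomial in $s,t$ with integer coefficients. *)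

theory Defs
  imports "Jordan_Normal_Form.Determinant" "HOL-Computational_Algebra.Polynomial"
begin

text \<open>Bivariate integer polynomials in s and t are represented as int poly poly:
  the outer variable is t, the inner variable (coefficients) is s.\<close>

definition var_s :: "int poly poly" where
  "var_s = [:[:0, 1:]:]"

definition var_t :: "int poly poly" where
  "var_t = [:0, 1:]"

definition coeff_st :: "int poly poly \<Rightarrow> nat \<Rightarrow> nat \<Rightarrow> int" where
  "coeff_st p a b = coeff (coeff p b) a"

definition ent :: "'a mat \<Rightarrow> nat \<Rightarrow> nat \<Rightarrow> 'a" where
  "ent A i j = A $$ (i - 1, j - 1)"

end

theory Submission
  imports Defs
begin

text \<open>With 0-based indices, the matrix \<open>a\<close> is upper Hessenberg with subdiagonal \<open>s\<close>, so its
  leading principal minors satisfy \<open>D m = (\<Sum>r<m. a r (m-1) * (-s)^(m-1-r) * D r)\<close>. All other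
  entries on or above the diagonal are \<open>0\<close> or \<open>t\<close>, hence after substituting \<open>s \<mapsto> -s\<close> every
  coefficient of every \<open>D m\<close> is nonnegative. So nothing cancels, and every chain
  \<open>0 = r 0 < r 1 < \<dots> < r l = m\<close> with \<open>a (r i) (r (i+1) - 1) = t\<close> contributes at least \<open>1\<close> to the
  coefficient of \<open>s^(m-l) t^l\<close> in \<open>D m\<close>. A free entry \<open>t\<close> in position \<open>(i, j)\<close> (1-based) lies on
  such a chain of length 4 ending at \<open>n\<close>: through the positions \<open>(1, i-1), (i, j), (j+1, k+1), (k+2, n)\<close>
  if \<open>j \<le> k\<close>, and through \<open>(1, 1), (2, i-1), (i, j), (j+1, n)\<close> otherwise.\<close>

definition principal_mat :: "(nat \<Rightarrow> nat \<Rightarrow> 'a) \<Rightarrow> nat \<Rightarrow> 'a mat" where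
  "principal_mat f m = mat m m (\<lambda>(i, j). f i j)"

definition principal_mat_last_col :: "(nat \<Rightarrow> nat \<Rightarrow> 'a) \<Rightarrow> nat \<Rightarrow> (nat \<Rightarrow> 'a) \<Rightarrow> 'a mat" where
  "principal_mat_last_col f m v = mat m m (\<lambda>(i, j). if j = m - 1 then v i else f i j)"

lemma det_principal_mat_0 [simp]: "det (principal_mat f 0) = 1"
  by (simp add: principal_mat_def)

lemma principal_mat_eq_last_col: "principal_mat f m = principal_mat_last_col f m (\<lambda>i. f i (m - 1))"
  unfolding principal_mat_def principal_mat_last_col_def by (rule eq_matI) auto

lemma det_principal_mat_last_col_1: "det (principal_mat_last_col f (Suc 0) v) = v 0"
  by (subst det_single) (auto simp: principal_mat_last_col_def)

lemma det_principal_mat_last_col_Suc: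
  fixes f :: "nat \<Rightarrow> nat \<Rightarrow> 'a :: comm_ring_1"
  assumes "f (Suc m) m = c" and "\<And>j. j < m \<Longrightarrow> f (Suc m) j = 0"
  shows "det (principal_mat_last_col f (Suc (Suc m)) v)
    = v (Suc m) * det (principal_mat f (Suc m)) - c * det (principal_mat_last_col f (Suc m) v)"
proof -
  let ?G = "principal_mat_last_col f (Suc (Suc m)) v"
  have "det ?G = (\<Sum>j<Suc (Suc m). ?G $$ (Suc m, j) * cofactor ?G (Suc m) j)"
    by (rule laplace_expansion_row) (auto simp: principal_mat_last_col_def)
  also have "\<dots> = c * cofactor ?G (Suc m) m + v (Suc m) * cofactor ?G (Suc m) (Suc m)"
    using assms by (simp add: principal_mat_last_col_def)
  moreover have "mat_delete ?G (Suc m) (Suc m) = principal_mat f (Suc m)"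
    by (rule eq_matI) (auto simp: mat_delete_def principal_mat_last_col_def principal_mat_def)
  moreover have "mat_delete ?G (Suc m) m = principal_mat_last_col f (Suc m) v"
    by (rule eq_matI) (auto simp: mat_delete_def principal_mat_last_col_def)
  ultimately show ?thesis by (simp add: cofactor_def)
qed

lemma det_principal_mat_last_col_hessenberg:
  fixes f :: "nat \<Rightarrow> nat \<Rightarrow> 'a :: comm_ring_1"
  assumes subdiag: "\<And>i. Suc i < m \<Longrightarrow> f (Suc i) i = c"
    and lower: "\<And>i j. Suc j < i \<Longrightarrow> i < m \<Longrightarrow> f i j = 0"
    and "1 \<le> m"
  shows "det (principal_mat_last_col f m v)
    = (\<Sum>r<m. v r * ((- c) ^ (m - 1 - r) * det (principal_mat f r)))"
proof -
  have "det (principal_mat_last_col f (Suc p) v)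
      = (\<Sum>r<Suc p. v r * ((- c) ^ (p - r) * det (principal_mat f r)))" if "Suc p \<le> m" for p
    using that
  proof (induction p)
    case 0
    show ?case by (simp add: det_principal_mat_last_col_1)
  next
    case (Suc p)
    have "det (principal_mat_last_col f (Suc (Suc p)) v)
        = v (Suc p) * det (principal_mat f (Suc p)) - c * det (principal_mat_last_col f (Suc p) v)"
      using Suc.prems by (intro det_principal_mat_last_col_Suc subdiag lower) auto
    also have "\<dots> = v (Suc p) * det (principal_mat f (Suc p))
        + (- c) * (\<Sum>r<Suc p. v r * ((- c) ^ (p - r) * det (principal_mat f r)))"
      using Suc by simp
    also have "(- c) * (\<Sum>r<Suc p. v r * ((- c) ^ (p - r) * det (principal_mat f r)))
        = (\<Sum>r<Suc p. v r * ((- c) ^ (Suc p - r) * det (principal_mat f r)))"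
      unfolding sum_distrib_left
      by (intro sum.cong refl) (simp add: Suc_diff_le less_Suc_eq_le algebra_simps)
    finally show ?case by simp
  qed
  from this[of "m - 1"] show ?thesis using \<open>1 \<le> m\<close> by simp
qed

lemma det_principal_mat_hessenberg:
  fixes f :: "nat \<Rightarrow> nat \<Rightarrow> 'a :: comm_ring_1"
  assumes "\<And>i. Suc i < m \<Longrightarrow> f (Suc i) i = c"
    and "\<And>i j. Suc j < i \<Longrightarrow> i < m \<Longrightarrow> f i j = 0"
    and "1 \<le> m"
  shows "det (principal_mat f m)
    = (\<Sum>r<m. f r (m - 1) * ((- c) ^ (m - 1 - r) * det (principal_mat f r)))"
  unfolding principal_mat_eq_last_col[of f m]
  by (rule det_principal_mat_last_col_hessenberg) (use assms in auto)

text \<open>The coefficient of \<open>s\<^sup>x t\<^sup>y\<close> after the substitution \<open>s \<mapsto> -s\<close>.\<close>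
definition alt_coeff :: "int poly poly \<Rightarrow> nat \<Rightarrow> nat \<Rightarrow> int" where
  "alt_coeff p x y = (-1) ^ x * coeff_st p x y"

lemma alt_coeff_0 [simp]: "alt_coeff 0 x y = 0"
  by (simp add: alt_coeff_def coeff_st_def)

lemma alt_coeff_1: "alt_coeff 1 x y = (if x = 0 \<and> y = 0 then 1 else 0)"
  by (simp add: alt_coeff_def coeff_st_def coeff_1)

lemma alt_coeff_sum: "alt_coeff (\<Sum>a\<in>A. p a) x y = (\<Sum>a\<in>A. alt_coeff (p a) x y)"
  by (simp add: alt_coeff_def coeff_st_def coeff_sum sum_distrib_left)

lemma alt_coeff_var_t_mult:
  "alt_coeff (var_t * p) x y = (if y = 0 then 0 else alt_coeff p x (y - 1))"
  by (cases y) (simp_all add: alt_coeff_def coeff_st_def var_t_def)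

lemma alt_coeff_neg_var_s_mult:
  "alt_coeff ((- var_s) * p) x y = (if x = 0 then 0 else alt_coeff p (x - 1) y)"
proof -
  have "(- var_s) * p = smult [:0, -1:] p" by (simp add: var_s_def)
  then show ?thesis by (cases x) (simp_all add: alt_coeff_def coeff_st_def coeff_pCons)
qed

lemma alt_coeff_neg_var_s_power_mult:
  "alt_coeff ((- var_s) ^ d * p) x y = (if d \<le> x then alt_coeff p (x - d) y else 0)"
proof (induction d arbitrary: x)
  case (Suc d)
  have power_Suc_mult: "(- var_s) ^ Suc d * p = (- var_s) * ((- var_s) ^ d * p)" by simp
  show ?case unfolding power_Suc_mult alt_coeff_neg_var_s_mult using Suc by auto
qed simp

locale st_hessenberg =
  fixes f :: "nat \<Rightarrow> nat \<Rightarrow> int poly poly" and N :: nat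
  assumes subdiag: "\<And>i. Suc i < N \<Longrightarrow> f (Suc i) i = var_s"
    and lower: "\<And>i j. Suc j < i \<Longrightarrow> i < N \<Longrightarrow> f i j = 0"
    and upper: "\<And>i j. i \<le> j \<Longrightarrow> j < N \<Longrightarrow> f i j \<in> {0, var_t}"
begin

abbreviation D :: "nat \<Rightarrow> int poly poly" where
  "D m \<equiv> det (principal_mat f m)"

lemma det_principal_expansion:
  "1 \<le> m \<Longrightarrow> m \<le> N \<Longrightarrow> D m = (\<Sum>r<m. f r (m - 1) * ((- var_s) ^ (m - 1 - r) * D r))"
  by (rule det_principal_mat_hessenberg) (auto intro: subdiag lower)

lemma alt_coeff_expansion_term_nonneg:
  assumes "r < m" "m \<le> N" "\<And>x y. 0 \<le> alt_coeff (D r) x y"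
  shows "0 \<le> alt_coeff (f r (m - 1) * ((- var_s) ^ (m - 1 - r) * D r)) x y"
proof -
  have "f r (m - 1) \<in> {0, var_t}"
    using assms by (intro upper) auto
  then show ?thesis
    using assms(3) by (auto simp: alt_coeff_var_t_mult alt_coeff_neg_var_s_power_mult)
qed

lemma alt_coeff_det_principal_nonneg: "m \<le> N \<Longrightarrow> 0 \<le> alt_coeff (D m) x y"
proof (induction m arbitrary: x y rule: less_induct)
  case (less m)
  show ?case
  proof (cases "m = 0")
    case True
    then show ?thesis by (simp add: alt_coeff_1)
  next
    case False
    have "0 \<le> alt_coeff (f r (m - 1) * ((- var_s) ^ (m - 1 - r) * D r)) x y" if "r < m" for r
      using that less by (intro alt_coeff_expansion_term_nonneg) auto
    then show ?thesis
      using False less.prems by (auto simp: det_principal_expansion alt_coeff_sum intro!: sum_nonneg)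
  qed
qed

lemma alt_coeff_det_principal_step:
  assumes "r < m" "m \<le> N" "f r (m - 1) = var_t"
  shows "alt_coeff (D r) x y \<le> alt_coeff (D m) (x + (m - 1 - r)) (Suc y)"
proof -
  let ?term = "\<lambda>r. f r (m - 1) * ((- var_s) ^ (m - 1 - r) * D r)"
  have "alt_coeff (D r) x y = alt_coeff (?term r) (x + (m - 1 - r)) (Suc y)"
    using assms by (simp add: alt_coeff_var_t_mult alt_coeff_neg_var_s_power_mult)
  also have "\<dots> \<le> (\<Sum>r'<m. alt_coeff (?term r') (x + (m - 1 - r)) (Suc y))"
    using assms alt_coeff_expansion_term_nonneg alt_coeff_det_principal_nonneg
    by (intro member_le_sum) auto
  also have "\<dots> = alt_coeff (D m) (x + (m - 1 - r)) (Suc y)"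
    using assms by (simp add: det_principal_expansion alt_coeff_sum)
  finally show ?thesis .
qed

lemma alt_coeff_det_principal_chain:
  assumes "r 0 = 0" and "r l \<le> N"
    and "\<And>i. i < l \<Longrightarrow> r i < r (Suc i)"
    and "\<And>i. i < l \<Longrightarrow> f (r i) (r (Suc i) - 1) = var_t"
  shows "1 \<le> alt_coeff (D (r l)) (r l - l) l"
proof -
  have "l \<le> r l \<and> 1 \<le> alt_coeff (D (r l)) (r l - l) l"
    using assms(2-4)
  proof (induction l)
    case 0
    then show ?case using \<open>r 0 = 0\<close> by (simp add: alt_coeff_1)
  next
    case (Suc l)
    have incr: "r l < r (Suc l)"
      using Suc.prems by simp
    have IH: "l \<le> r l" "1 \<le> alt_coeff (D (r l)) (r l - l) l"
      using Suc incr by auto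
    with incr have x_shift: "r (Suc l) - Suc l = (r l - l) + (r (Suc l) - 1 - r l)"
      by simp
    show ?case
    proof
      show "Suc l \<le> r (Suc l)"
        using IH(1) incr by simp
      have "alt_coeff (D (r l)) (r l - l) l
          \<le> alt_coeff (D (r (Suc l))) (r l - l + (r (Suc l) - 1 - r l)) (Suc l)"
        using incr Suc.prems by (intro alt_coeff_det_principal_step) auto
      with IH(2) show "1 \<le> alt_coeff (D (r (Suc l))) (r (Suc l) - Suc l) (Suc l)"
        unfolding x_shift by (rule order_trans)
    qed
  qed
  then show ?thesis ..
qed

end

theorem proposition5p8:
  fixes k n :: nat and A :: "int poly poly mat"
  assumes k2: "k \<ge> 2"
    and n_def: "n = 2 * k + 1"
    and dim: "A \<in> carrier_mat n n"
    and subdiag: "\<forall>i. 1 \<le> i \<and> i \<le> n - 1 \<longrightarrow> ent A (i + 1) i = var_s"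
    and lower: "\<forall>i j. 1 \<le> j \<and> j + 1 < i \<and> i \<le> n \<longrightarrow> ent A i j = 0"
    and row1a: "\<forall>j. 1 \<le> j \<and> j \<le> k \<longrightarrow> ent A 1 j = var_t"
    and row1b: "\<forall>j. k + 1 \<le> j \<and> j \<le> 2 * k \<longrightarrow> ent A 1 j = 0"
    and row1c: "ent A 1 n = var_t"
    and top_t: "\<forall>i j. 2 \<le> i \<and> i \<le> k + 1 \<and> k + 1 \<le> j \<and> j \<le> 2 * k \<longrightarrow> ent A i j = var_t"
    and top_n: "\<forall>i. 2 \<le> i \<and> i \<le> k + 1 \<longrightarrow> ent A i n = 0"
    and bot_n: "\<forall>i. k + 2 \<le> i \<and> i \<le> n \<longrightarrow> ent A i n = var_t"
    and free: "\<forall>i j. ((2 \<le> i \<and> i \<le> j \<and> j \<le> k) \<or> (k + 2 \<le> i \<and> i \<le> j \<and> j \<le> 2 * k))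
                 \<longrightarrow> ent A i j \<in> {0, var_t}"
    and some_t: "\<exists>i j. ((2 \<le> i \<and> i \<le> j \<and> j \<le> k) \<or> (k + 2 \<le> i \<and> i \<le> j \<and> j \<le> 2 * k))
                 \<and> ent A i j = var_t"
  shows "coeff_st (det A) (n - 4) 4 \<noteq> 0"
proof -
  define f where "f i j = ent A (Suc i) (Suc j)" for i j
  interpret st_hessenberg f n
  proof
    show "f (Suc i) i = var_s" if "Suc i < n" for i
      using that subdiag by (simp add: f_def)
    show "f i j = 0" if "Suc j < i" "i < n" for i j
      using that lower by (simp add: f_def)
    show "f i j \<in> {0, var_t}" if "i \<le> j" "j < n" for i j
      using that n_def row1a row1b row1c top_t top_n bot_n free unfolding f_def
      by (cases "i = 0"; cases "i \<le> k"; cases "j < k"; cases "Suc j = n") auto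
  qed
  have "A = principal_mat f n"
    using dim by (intro eq_matI) (auto simp: principal_mat_def f_def ent_def)
  moreover obtain i j where t_entry: "ent A i j = var_t"
    and ij: "(2 \<le> i \<and> i \<le> j \<and> j \<le> k) \<or> (k + 2 \<le> i \<and> i \<le> j \<and> j \<le> 2 * k)"
    using some_t by blast
  have "1 \<le> alt_coeff (D n) (n - 4) 4"
    using ij
  proof
    assume ij: "2 \<le> i \<and> i \<le> j \<and> j \<le> k"
    let ?r = "\<lambda>l. [0, i - 1, j, k + 1, n] ! l"
    have "ent A 1 (i - 1) = var_t"
      using ij by (intro row1a[rule_format]) auto
    then have "f 0 (i - 2) = var_t" "f (i - 1) (j - 1) = var_t" "f j k = var_t"
      "f (k + 1) (n - 1) = var_t"
      using ij t_entry top_t[rule_format, of "j + 1" "k + 1"] bot_n[rule_format, of "k + 2"] n_def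
      by (auto simp: f_def Suc_diff_Suc numeral_2_eq_2)
    then have "1 \<le> alt_coeff (D (?r 4)) (?r 4 - 4) 4"
      using ij n_def
      by (intro alt_coeff_det_principal_chain) (auto simp: less_Suc_eq numeral_eq_Suc)
    then show ?thesis by simp
  next
    assume ij: "k + 2 \<le> i \<and> i \<le> j \<and> j \<le> 2 * k"
    let ?r = "\<lambda>l. [0, 1, i - 1, j, n] ! l"
    have "ent A 2 (i - 1) = var_t"
      using ij by (intro top_t[rule_format]) auto
    then have "f 0 0 = var_t" "f 1 (i - 2) = var_t" "f (i - 1) (j - 1) = var_t"
      "f j (n - 1) = var_t"
      using ij k2 t_entry row1a[rule_format, of 1] bot_n[rule_format, of "j + 1"] n_def
      by (auto simp: f_def Suc_diff_Suc numeral_2_eq_2)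
    then have "1 \<le> alt_coeff (D (?r 4)) (?r 4 - 4) 4"
      using ij n_def
      by (intro alt_coeff_det_principal_chain) (auto simp: less_Suc_eq numeral_eq_Suc)
    then show ?thesis by simp
  qed
  ultimately show ?thesis by (auto simp: alt_coeff_def)
qed

end
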